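(* Let $L$ be a finite-dimensional Lie algebra over a field $F$. The relation "is $L$-connected to" is an equivalence relation on the set of chief factors of $L$.
   Context: A chief factor of $L$ is a quotient $A/B$ of ideals $B\subsetneq A$ with no ideal of $L$ strictly between them; two chief factors are $L$-isomorphic if they are isomorphic as $L$-modules. The core $U_L$ of a subalgebra is the largest ideal of $L$ contained in it; $L$ is primitive if it has a maximal subalgebra with zero core, and a primitive Lie algebra is of type 3 if it has precisely two distinct minimal ideals, both non-abelian. Two chief factors $A_1/B_1$, $A_2/B_2$ of $L$ are $L$-connected if either they are $L$-isomorphic, or there is an ideal $N$ of $L$ such that $L/N$ is primitive of type 3 and its two minimal ideals $E_1/N$, $E_2/N$ satisfy $E_1/N \cong_L A_1/B_1$ and $E_2/N \cong_L A_2/B_2$ (as $L$-modules). *)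

theory Defs
  imports Main "HOL.Vector_Spaces"
begin

definition lie_algebra :: "('k::field \<Rightarrow> 'v::ab_group_add \<Rightarrow> 'v) \<Rightarrow> ('v \<Rightarrow> 'v \<Rightarrow> 'v) \<Rightarrow> bool" where
  "lie_algebra scale br \<longleftrightarrow> vector_space scale
     \<and> (\<forall>x y z. br (x + y) z = br x z + br y z)
     \<and> (\<forall>x y z. br x (y + z) = br x y + br x z)
     \<and> (\<forall>c x y. br (scale c x) y = scale c (br x y))
     \<and> (\<forall>c x y. br x (scale c y) = scale c (br x y))
     \<and> (\<forall>x. br x x = 0)
     \<and> (\<forall>x y z. br x (br y z) + br y (br z x) + br z (br x y) = 0)"

definition finite_dim :: "('k::field \<Rightarrow> 'v::ab_group_add \<Rightarrow> 'v) \<Rightarrow> bool" where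
  "finite_dim scale \<longleftrightarrow> (\<exists>B. finite B \<and> module.span scale B = UNIV)"

definition lie_ideal :: "('k::field \<Rightarrow> 'v::ab_group_add \<Rightarrow> 'v) \<Rightarrow> ('v \<Rightarrow> 'v \<Rightarrow> 'v) \<Rightarrow> 'v set \<Rightarrow> bool" where
  "lie_ideal scale br I \<longleftrightarrow> module.subspace scale I \<and> (\<forall>x a. a \<in> I \<longrightarrow> br x a \<in> I)"

definition lie_subalgebra :: "('k::field \<Rightarrow> 'v::ab_group_add \<Rightarrow> 'v) \<Rightarrow> ('v \<Rightarrow> 'v \<Rightarrow> 'v) \<Rightarrow> 'v set \<Rightarrow> bool" where
  "lie_subalgebra scale br S \<longleftrightarrow> module.subspace scale S \<and> (\<forall>a\<in>S. \<forall>b\<in>S. br a b \<in> S)"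

definition chief_factor :: "('k::field \<Rightarrow> 'v::ab_group_add \<Rightarrow> 'v) \<Rightarrow> ('v \<Rightarrow> 'v \<Rightarrow> 'v) \<Rightarrow> 'v set \<Rightarrow> 'v set \<Rightarrow> bool" where
  "chief_factor scale br A B \<longleftrightarrow> lie_ideal scale br A \<and> lie_ideal scale br B \<and> B \<subset> A
     \<and> \<not> (\<exists>C. lie_ideal scale br C \<and> B \<subset> C \<and> C \<subset> A)"

definition chief_factors :: "('k::field \<Rightarrow> 'v::ab_group_add \<Rightarrow> 'v) \<Rightarrow> ('v \<Rightarrow> 'v \<Rightarrow> 'v) \<Rightarrow> ('v set \<times> 'v set) set" where
  "chief_factors scale br = {(A, B). chief_factor scale br A B}"

text \<open>A/B and A'/B' (with B \<subseteq> A, B' \<subseteq> A' ideals) are isomorphic as L-modules (adjoint action):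
  there is a linear map f : A \<rightarrow> A' inducing a bijective L-module homomorphism A/B \<rightarrow> A'/B'.\<close>
definition lie_mod_iso :: "('k::field \<Rightarrow> 'v::ab_group_add \<Rightarrow> 'v) \<Rightarrow> ('v \<Rightarrow> 'v \<Rightarrow> 'v) \<Rightarrow> 'v set \<Rightarrow> 'v set \<Rightarrow> 'v set \<Rightarrow> 'v set \<Rightarrow> bool" where
  "lie_mod_iso scale br A B A' B' \<longleftrightarrow> (\<exists>f.
       (\<forall>a\<in>A. \<forall>b\<in>A. f (a + b) = f a + f b)
     \<and> (\<forall>c. \<forall>a\<in>A. f (scale c a) = scale c (f a))
     \<and> f ` A \<subseteq> A'
     \<and> (\<forall>a\<in>A. f a \<in> B' \<longleftrightarrow> a \<in> B)
     \<and> (\<forall>a'\<in>A'. \<exists>a\<in>A. a' - f a \<in> B')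
     \<and> (\<forall>x. \<forall>a\<in>A. br x (f a) - f (br x a) \<in> B'))"

definition maximal_subalgebra :: "('k::field \<Rightarrow> 'v::ab_group_add \<Rightarrow> 'v) \<Rightarrow> ('v \<Rightarrow> 'v \<Rightarrow> 'v) \<Rightarrow> 'v set \<Rightarrow> bool" where
  "maximal_subalgebra scale br M \<longleftrightarrow> lie_subalgebra scale br M \<and> M \<noteq> UNIV
     \<and> (\<forall>S. lie_subalgebra scale br S \<and> M \<subseteq> S \<longrightarrow> S = M \<or> S = UNIV)"

text \<open>L/N is primitive: L/N has a maximal subalgebra M/N whose core (in L/N) is zero.
  Subalgebras/ideals of L/N correspond to subalgebras/ideals of L containing N.\<close>
definition quotient_primitive :: "('k::field \<Rightarrow> 'v::ab_group_add \<Rightarrow> 'v) \<Rightarrow> ('v \<Rightarrow> 'v \<Rightarrow> 'v) \<Rightarrow> 'v set \<Rightarrow> bool" where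
  "quotient_primitive scale br N \<longleftrightarrow> lie_ideal scale br N \<and>
     (\<exists>M. N \<subseteq> M \<and> maximal_subalgebra scale br M
        \<and> (\<forall>I. lie_ideal scale br I \<and> N \<subseteq> I \<and> I \<subseteq> M \<longrightarrow> I = N))"

definition minimal_ideal_over :: "('k::field \<Rightarrow> 'v::ab_group_add \<Rightarrow> 'v) \<Rightarrow> ('v \<Rightarrow> 'v \<Rightarrow> 'v) \<Rightarrow> 'v set \<Rightarrow> 'v set \<Rightarrow> bool" where
  "minimal_ideal_over scale br N E \<longleftrightarrow> lie_ideal scale br E \<and> N \<subset> E
     \<and> \<not> (\<exists>C. lie_ideal scale br C \<and> N \<subset> C \<and> C \<subset> E)"

definition nonabelian_over :: "('v \<Rightarrow> 'v \<Rightarrow> 'v) \<Rightarrow> 'v set \<Rightarrow> 'v set \<Rightarrow> bool" where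
  "nonabelian_over br N E \<longleftrightarrow> (\<exists>a\<in>E. \<exists>b\<in>E. br a b \<notin> N)"

definition quotient_primitive_type3 :: "('k::field \<Rightarrow> 'v::ab_group_add \<Rightarrow> 'v) \<Rightarrow> ('v \<Rightarrow> 'v \<Rightarrow> 'v) \<Rightarrow> 'v set \<Rightarrow> bool" where
  "quotient_primitive_type3 scale br N \<longleftrightarrow> quotient_primitive scale br N
     \<and> (\<exists>E1 E2. E1 \<noteq> E2 \<and> minimal_ideal_over scale br N E1 \<and> minimal_ideal_over scale br N E2
          \<and> (\<forall>E. minimal_ideal_over scale br N E \<longrightarrow> E = E1 \<or> E = E2))
     \<and> (\<forall>E. minimal_ideal_over scale br N E \<longrightarrow> nonabelian_over br N E)"

definition L_connected :: "('k::field \<Rightarrow> 'v::ab_group_add \<Rightarrow> 'v) \<Rightarrow> ('v \<Rightarrow> 'v \<Rightarrow> 'v) \<Rightarrow> 'v set \<Rightarrow> 'v set \<Rightarrow> 'v set \<Rightarrow> 'v set \<Rightarrow> bool" where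
  "L_connected scale br A1 B1 A2 B2 \<longleftrightarrow> lie_mod_iso scale br A1 B1 A2 B2 \<or>
     (\<exists>N E1 E2. quotient_primitive_type3 scale br N \<and> E1 \<noteq> E2
        \<and> minimal_ideal_over scale br N E1 \<and> minimal_ideal_over scale br N E2
        \<and> lie_mod_iso scale br E1 N A1 B1 \<and> lie_mod_iso scale br E2 N A2 B2)"

definition L_connected_rel :: "('k::field \<Rightarrow> 'v::ab_group_add \<Rightarrow> 'v) \<Rightarrow> ('v \<Rightarrow> 'v \<Rightarrow> 'v) \<Rightarrow> (('v set \<times> 'v set) \<times> ('v set \<times> 'v set)) set" where
  "L_connected_rel scale br = {((A1, B1), (A2, B2)).
     chief_factor scale br A1 B1 \<and> chief_factor scale br A2 B2 \<and> L_connected scale br A1 B1 A2 B2}"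

end

theory Submission
  imports Defs "HOL-Library.Set_Algebras"
begin

text \<open>The crux is a chain
  of two type 3 links: L/N with minimal ideals E1/N = A1/B1 and E2/N = A2/B2, and L/N' with
  minimal ideals E1'/N' = A2/B2 and E2'/N' = A3/B3 (up to L-isomorphism). In a primitive
  quotient of type 3 each minimal ideal is the centralizer of the other, and L-isomorphic factors
  have the same centralizer, so E1 = C_L(A2/B2) = E2'; call it X. If E2 = E1' then N = N' and
  A1/B1 = A3/B3. Otherwise put P = E2, Q = E1'. Chief factor arguments give X \<subseteq> P + Q,
  P \<subseteq> X + Q and Q \<subseteq> X + P, so Q/(P \<inter> Q) = X/N and P/(P \<inter> Q) = X/N' by the second
  isomorphism theorem, and L/(P \<inter> Q) is primitive of type 3 with minimal ideals P and Q: if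
  M/N and M'/N' are the core-free maximal subalgebras, the elements x with
  x \<equiv> m (mod P), m \<equiv> m' (mod X), m' \<equiv> x (mod Q) for some m \<in> M, m' \<in> M' form a core-free
  maximal subalgebra over P \<inter> Q.\<close>

lemma subset_set_plus_right:
  fixes U V :: "'a::monoid_add set"
  assumes "0 \<in> V" shows "U \<subseteq> U + V"
proof
  fix u assume "u \<in> U"
  then have "u + 0 \<in> U + V" using assms by (rule set_plus_intro)
  then show "u \<in> U + V" by simp
qed

lemma (in vector_space) subspace_set_plus: "subspace U \<Longrightarrow> subspace V \<Longrightarrow> subspace (U + V)"
proof -
  have "U + V = {x + y |x y. x \<in> U \<and> y \<in> V}" by (auto simp: set_plus_def)
  then show "subspace U \<Longrightarrow> subspace V \<Longrightarrow> subspace (U + V)" using subspace_sums by simp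
qed

lemma (in vector_space) exists_linear_lift:
  assumes U: "subspace U" and A: "subspace A" and P: "subspace P"
    and f_add: "\<forall>a\<in>A. \<forall>b\<in>A. f (a + b) = f a + f b"
    and f_scale: "\<forall>c. \<forall>a\<in>A. f (scale c a) = scale c (f a)"
    and lift: "\<forall>u\<in>U. \<exists>a\<in>A. u - f a \<in> P"
  shows "\<exists>g. Vector_Spaces.linear scale scale g \<and> (\<forall>u\<in>U. g u \<in> A \<and> u - f (g u) \<in> P)"
proof -
  interpret pair: vector_space_pair scale scale by unfold_locales
  obtain B where B: "B \<subseteq> U" "independent B" "U \<subseteq> span B" by (rule basis_exists)
  define h where "h b = (SOME a. a \<in> A \<and> b - f a \<in> P)" for b
  have h: "h b \<in> A \<and> b - f (h b) \<in> P" if "b \<in> B" for b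
    unfolding h_def using lift B(1) that by (metis (mono_tags, lifting) someI subsetD)
  define g where "g = pair.construct B h"
  have g: "Vector_Spaces.linear scale scale g"
    unfolding g_def by (rule pair.linear_construct[OF B(2)])
  then have g_add: "g (x + y) = g x + g y" and g_scale: "g (scale c x) = scale c (g x)" for x y c
    by (auto simp: linear_iff)
  have f0: "f 0 = 0"
    using f_add subspace_0[OF A] by (metis add_cancel_right_right)
  have "subspace {u. g u \<in> A \<and> u - f (g u) \<in> P}"
  proof (rule subspaceI)
    show "0 \<in> {u. g u \<in> A \<and> u - f (g u) \<in> P}"
      using g_scale[of 0 0] f0 subspace_0[OF A] subspace_0[OF P] by simp
  next
    fix x y assume x: "x \<in> {u. g u \<in> A \<and> u - f (g u) \<in> P}" and y: "y \<in> {u. g u \<in> A \<and> u - f (g u) \<in> P}"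
    then have "f (g (x + y)) = f (g x) + f (g y)" using f_add g_add by simp
    then have e: "x + y - f (g (x + y)) = (x - f (g x)) + (y - f (g y))" by (simp add: algebra_simps)
    have "x + y - f (g (x + y)) \<in> P" unfolding e using x y subspace_add[OF P] by blast
    moreover have "g (x + y) \<in> A" using x y g_add subspace_add[OF A] by simp
    ultimately show "x + y \<in> {u. g u \<in> A \<and> u - f (g u) \<in> P}" by blast
  next
    fix c x assume "x \<in> {u. g u \<in> A \<and> u - f (g u) \<in> P}"
    moreover have "scale c x - f (g (scale c x)) = scale c (x - f (g x))" if "g x \<in> A"
      using that f_scale g_scale by (simp add: scale_right_diff_distrib)
    ultimately show "scale c x \<in> {u. g u \<in> A \<and> u - f (g u) \<in> P}"
      using g_scale subspace_scale[OF A] subspace_scale[OF P] by auto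
  qed
  then have "span B \<subseteq> {u. g u \<in> A \<and> u - f (g u) \<in> P}"
    using h pair.construct_basis[OF B(2)] by (intro span_minimal) (auto simp: g_def)
  then show ?thesis
    using g B(3) by blast
qed

locale lie_alg =
  fixes scale :: "'k::field \<Rightarrow> 'v::ab_group_add \<Rightarrow> 'v" and br :: "'v \<Rightarrow> 'v \<Rightarrow> 'v"
  assumes lie_algebra: "lie_algebra scale br"
begin

sublocale vector_space scale
  using lie_algebra unfolding lie_algebra_def by blast

lemma bracket_add_left: "br (x + y) z = br x z + br y z"
  using lie_algebra unfolding lie_algebra_def by blast

lemma bracket_add_right: "br x (y + z) = br x y + br x z"
  using lie_algebra unfolding lie_algebra_def by blast

lemma bracket_self [simp]: "br x x = 0"
  using lie_algebra unfolding lie_algebra_def by blast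

lemma jacobi: "br x (br y z) + br y (br z x) + br z (br x y) = 0"
  using lie_algebra unfolding lie_algebra_def by blast

lemma bracket_scale_left: "br (scale c x) y = scale c (br x y)"
  using lie_algebra unfolding lie_algebra_def by blast

lemma bracket_zero_left [simp]: "br 0 x = 0"
  by (metis add_cancel_right_right add_0 bracket_add_left)

lemma bracket_zero_right [simp]: "br x 0 = 0"
  by (metis add_cancel_right_right add_0 bracket_add_right)

lemma bracket_minus_left: "br (- x) y = - br x y"
  by (metis add.right_inverse bracket_add_left bracket_zero_left eq_neg_iff_add_eq_0)

lemma bracket_minus_right: "br x (- y) = - br x y"
  by (metis add.right_inverse bracket_add_right bracket_zero_right eq_neg_iff_add_eq_0)

lemma bracket_diff_left: "br (x - y) z = br x z - br y z"
  by (simp only: diff_conv_add_uminus bracket_add_left bracket_minus_left)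

lemma bracket_diff_right: "br x (y - z) = br x y - br x z"
  by (simp only: diff_conv_add_uminus bracket_add_right bracket_minus_right)

lemma bracket_antisym: "br x y = - br y x"
proof -
  have "0 = br (x + y) (x + y)" by simp
  also have "\<dots> = br x x + br y x + (br x y + br y y)"
    by (simp only: bracket_add_left bracket_add_right)
  also have "\<dots> = br x y + br y x" by (simp add: add.commute)
  finally show ?thesis by (metis eq_neg_iff_add_eq_0)
qed

abbreviation ideal :: "'v set \<Rightarrow> bool" where
  "ideal \<equiv> lie_ideal scale br"

abbreviation subalgebra :: "'v set \<Rightarrow> bool" where
  "subalgebra \<equiv> lie_subalgebra scale br"

lemma ideal_subspace: "ideal I \<Longrightarrow> subspace I"
  unfolding lie_ideal_def by blast

lemma ideal_bracket_right: "ideal I \<Longrightarrow> a \<in> I \<Longrightarrow> br x a \<in> I"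
  unfolding lie_ideal_def by blast

lemma ideal_zero: "ideal I \<Longrightarrow> 0 \<in> I"
  using ideal_subspace subspace_0 by blast

lemma ideal_add: "ideal I \<Longrightarrow> a \<in> I \<Longrightarrow> b \<in> I \<Longrightarrow> a + b \<in> I"
  using ideal_subspace subspace_add by blast

lemma ideal_minus: "ideal I \<Longrightarrow> a \<in> I \<Longrightarrow> - a \<in> I"
  using ideal_subspace subspace_neg by blast

lemma ideal_diff: "ideal I \<Longrightarrow> a \<in> I \<Longrightarrow> b \<in> I \<Longrightarrow> a - b \<in> I"
  using ideal_subspace subspace_diff by blast

lemma ideal_diff_iff:
  assumes "ideal I" and "a - b \<in> I" shows "a \<in> I \<longleftrightarrow> b \<in> I"
proof
  assume "a \<in> I"
  then have "a - (a - b) \<in> I" using assms ideal_diff by blast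
  then show "b \<in> I" by simp
next
  assume "b \<in> I"
  then have "(a - b) + b \<in> I" using assms ideal_add by blast
  then show "a \<in> I" by simp
qed

lemma ideal_minus_iff: "ideal I \<Longrightarrow> - a \<in> I \<longleftrightarrow> a \<in> I"
  using ideal_minus by fastforce

lemma ideal_bracket_left: "ideal I \<Longrightarrow> a \<in> I \<Longrightarrow> br a x \<in> I"
  using ideal_minus[OF _ ideal_bracket_right, of I a x] by (simp add: bracket_antisym[of a x])

lemma ideal_Int: "ideal I \<Longrightarrow> ideal J \<Longrightarrow> ideal (I \<inter> J)"
  unfolding lie_ideal_def using subspace_inter by blast

lemma ideal_bracket_Int: "ideal I \<Longrightarrow> ideal J \<Longrightarrow> a \<in> I \<Longrightarrow> b \<in> J \<Longrightarrow> br a b \<in> I \<inter> J"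
  using ideal_bracket_left ideal_bracket_right by blast

lemma ideal_set_plus:
  assumes I: "ideal I" and J: "ideal J" shows "ideal (I + J)"
  unfolding lie_ideal_def
proof (intro conjI allI impI)
  show "subspace (I + J)" using I J subspace_set_plus ideal_subspace by blast
  fix x c assume "c \<in> I + J"
  then obtain a b where "c = a + b" "a \<in> I" "b \<in> J" by (rule set_plus_elim)
  then show "br x c \<in> I + J"
    using I J ideal_bracket_right by (simp add: bracket_add_right set_plus_intro)
qed

lemma set_plus_subset_ideal:
  assumes "ideal I" and "U \<subseteq> I" and "V \<subseteq> I" shows "U + V \<subseteq> I"
proof
  fix x assume "x \<in> U + V"
  then obtain u v where "x = u + v" "u \<in> U" "v \<in> V" by (rule set_plus_elim)
  then show "x \<in> I" using assms by (simp add: ideal_add subsetD)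
qed

lemma subalgebra_subspace: "subalgebra S \<Longrightarrow> subspace S"
  unfolding lie_subalgebra_def by blast

lemma subalgebra_bracket: "subalgebra S \<Longrightarrow> a \<in> S \<Longrightarrow> b \<in> S \<Longrightarrow> br a b \<in> S"
  unfolding lie_subalgebra_def by blast

definition centralizer :: "'v set \<Rightarrow> 'v set \<Rightarrow> 'v set" where
  "centralizer A B = {x. \<forall>a\<in>A. br x a \<in> B}"

lemma centralizer_ideal:
  assumes A: "ideal A" and B: "ideal B"
  shows "ideal (centralizer A B)"
  unfolding lie_ideal_def
proof (intro conjI allI impI)
  show "subspace (centralizer A B)"
  proof (rule subspaceI)
    show "0 \<in> centralizer A B" unfolding centralizer_def using ideal_zero[OF B] by simp
  next
    fix x y assume "x \<in> centralizer A B" "y \<in> centralizer A B"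
    then show "x + y \<in> centralizer A B"
      unfolding centralizer_def using ideal_add[OF B] by (simp add: bracket_add_left)
  next
    fix c x assume "x \<in> centralizer A B"
    then show "scale c x \<in> centralizer A B"
      unfolding centralizer_def using subspace_scale[OF ideal_subspace[OF B]]
      by (simp add: bracket_scale_left)
  qed
next
  fix y x assume x: "x \<in> centralizer A B"
  show "br y x \<in> centralizer A B" unfolding centralizer_def mem_Collect_eq
  proof
    fix a assume a: "a \<in> A"
    have "br y (br x a) \<in> B" "br x (br a y) \<in> B"
      using x a ideal_bracket_right[OF B] ideal_bracket_left[OF A a]
      unfolding centralizer_def by auto
    then have "br y (br x a) + br x (br a y) \<in> B" using ideal_add[OF B] by blast
    moreover have "br a (br y x) + (br y (br x a) + br x (br a y)) = 0"
      using jacobi[of y x a] by (simp only: ac_simps)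
    then have "br a (br y x) = - (br y (br x a) + br x (br a y))"
      by (rule eq_neg_iff_add_eq_0[THEN iffD2])
    then have "br (br y x) a = br y (br x a) + br x (br a y)"
      using bracket_antisym[of "br y x" a] by simp
    ultimately show "br (br y x) a \<in> B" by simp
  qed
qed

definition lie_mod_iso_map :: "('v \<Rightarrow> 'v) \<Rightarrow> 'v set \<Rightarrow> 'v set \<Rightarrow> 'v set \<Rightarrow> 'v set \<Rightarrow> bool" where
  "lie_mod_iso_map f A B A' B' \<longleftrightarrow>
       (\<forall>a\<in>A. \<forall>b\<in>A. f (a + b) = f a + f b)
     \<and> (\<forall>c. \<forall>a\<in>A. f (scale c a) = scale c (f a))
     \<and> f ` A \<subseteq> A'
     \<and> (\<forall>a\<in>A. f a \<in> B' \<longleftrightarrow> a \<in> B)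
     \<and> (\<forall>a'\<in>A'. \<exists>a\<in>A. a' - f a \<in> B')
     \<and> (\<forall>x. \<forall>a\<in>A. br x (f a) - f (br x a) \<in> B')"

lemma lie_mod_iso_iff_map: "lie_mod_iso scale br A B A' B' \<longleftrightarrow> (\<exists>f. lie_mod_iso_map f A B A' B')"
  unfolding lie_mod_iso_def lie_mod_iso_map_def by (rule refl)

context
  fixes f A B A' B' assumes f: "lie_mod_iso_map f A B A' B'"
begin

lemma lie_mod_iso_mapD:
  "a \<in> A \<Longrightarrow> b \<in> A \<Longrightarrow> f (a + b) = f a + f b"
  "a \<in> A \<Longrightarrow> f (scale c a) = scale c (f a)"
  "a \<in> A \<Longrightarrow> f a \<in> A'"
  "a \<in> A \<Longrightarrow> f a \<in> B' \<longleftrightarrow> a \<in> B"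
  "a' \<in> A' \<Longrightarrow> \<exists>a\<in>A. a' - f a \<in> B'"
  "a \<in> A \<Longrightarrow> br x (f a) - f (br x a) \<in> B'"
  using f unfolding lie_mod_iso_map_def by blast+

lemma lie_mod_iso_map_congruent:
  assumes "ideal A" and "a \<in> A" and "b \<in> A" shows "f a - f b \<in> B' \<longleftrightarrow> a - b \<in> B"
proof -
  have "f (a - b + b) = f (a - b) + f b"
    using ideal_diff[OF assms] assms(3) by (rule lie_mod_iso_mapD(1))
  then have "f a - f b = f (a - b)" by simp
  then show ?thesis using lie_mod_iso_mapD(4) ideal_diff[OF assms] by simp
qed

lemma lie_mod_iso_map_bracket:
  assumes "ideal A" and "ideal B'" and "a \<in> A" shows "br x (f a) \<in> B' \<longleftrightarrow> br x a \<in> B"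
  using ideal_diff_iff[OF assms(2) lie_mod_iso_mapD(6)[OF assms(3)]]
    lie_mod_iso_mapD(4) ideal_bracket_right[OF assms(1,3)] by blast

end

lemma lie_mod_iso_refl:
  assumes "ideal B" shows "lie_mod_iso scale br A B A B"
proof -
  have "\<forall>a'\<in>A. \<exists>a\<in>A. a' - id a \<in> B"
  proof
    fix a' assume "a' \<in> A"
    then show "\<exists>a\<in>A. a' - id a \<in> B" using ideal_zero[OF assms] by (intro bexI[of _ a']) simp_all
  qed
  then show ?thesis unfolding lie_mod_iso_def by (intro exI[of _ id]) (simp add: ideal_zero[OF assms])
qed

lemma lie_mod_iso_trans:
  assumes A: "ideal A" and A': "ideal A'" and B'': "ideal B''"
    and "lie_mod_iso scale br A B A' B'" and "lie_mod_iso scale br A' B' A'' B''"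
  shows "lie_mod_iso scale br A B A'' B''"
proof -
  obtain f g where f: "lie_mod_iso_map f A B A' B'" and g: "lie_mod_iso_map g A' B' A'' B''"
    using assms(4,5) unfolding lie_mod_iso_iff_map by blast
  note fD = lie_mod_iso_mapD[OF f] and gD = lie_mod_iso_mapD[OF g]
  have g_cong: "g a - g b \<in> B''" if "a \<in> A'" "b \<in> A'" "a - b \<in> B'" for a b
    using lie_mod_iso_map_congruent[OF g A' that(1,2)] that(3) by blast
  have "lie_mod_iso_map (g \<circ> f) A B A'' B''"
    unfolding lie_mod_iso_map_def
  proof (intro conjI ballI allI subsetI)
    fix a'' assume "a'' \<in> A''"
    then obtain a' where a': "a' \<in> A'" "a'' - g a' \<in> B''" using gD(5) by blast
    then obtain a where a: "a \<in> A" "a' - f a \<in> B'" using fD(5) by blast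
    have "(a'' - g a') + (g a' - g (f a)) \<in> B''"
      using a a' fD(3) g_cong ideal_add[OF B''] by blast
    then show "\<exists>a\<in>A. a'' - (g \<circ> f) a \<in> B''" using a by auto
  next
    fix x a assume a: "a \<in> A"
    have "br x (g (f a)) - g (br x (f a)) \<in> B''" using gD(6) fD(3) a by blast
    moreover have "g (br x (f a)) - g (f (br x a)) \<in> B''"
      using g_cong fD(3,6) a ideal_bracket_right[OF A'] ideal_bracket_right[OF A] by blast
    ultimately have "(br x (g (f a)) - g (br x (f a))) + (g (br x (f a)) - g (f (br x a))) \<in> B''"
      using ideal_add[OF B''] by blast
    then show "br x ((g \<circ> f) a) - (g \<circ> f) (br x a) \<in> B''" by simp
  qed (use fD gD subspace_add[OF ideal_subspace[OF A]] subspace_scale[OF ideal_subspace[OF A]]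
       in \<open>auto\<close>)
  then show ?thesis unfolding lie_mod_iso_iff_map by blast
qed

lemma lie_mod_iso_sym:
  assumes A: "ideal A" and B: "ideal B" and A': "ideal A'" and B': "ideal B'"
    and "lie_mod_iso scale br A B A' B'"
  shows "lie_mod_iso scale br A' B' A B"
proof -
  obtain f where f: "lie_mod_iso_map f A B A' B'"
    using assms(5) unfolding lie_mod_iso_iff_map by blast
  note fD = lie_mod_iso_mapD[OF f] and f_cong = lie_mod_iso_map_congruent[OF f A]
  have "\<forall>a\<in>A. \<forall>b\<in>A. f (a + b) = f a + f b" "\<forall>c. \<forall>a\<in>A. f (scale c a) = scale c (f a)"
    "\<forall>a'\<in>A'. \<exists>a\<in>A. a' - f a \<in> B'"
    using f unfolding lie_mod_iso_map_def by blast+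
  then obtain g where g: "Vector_Spaces.linear scale scale g"
    and gA: "\<forall>u\<in>A'. g u \<in> A \<and> u - f (g u) \<in> B'"
    using exists_linear_lift[OF ideal_subspace[OF A'] ideal_subspace[OF A] ideal_subspace[OF B']]
    by blast
  have g_inv: "f (g u) - u \<in> B'" if "u \<in> A'" for u
    using ideal_minus[OF B', of "u - f (g u)"] gA that by simp
  have "lie_mod_iso_map g A' B' A B"
    unfolding lie_mod_iso_map_def
  proof (intro conjI ballI allI subsetI)
    fix a assume a: "a \<in> A'"
    then have "g a \<in> A" "a - f (g a) \<in> B'" using gA by auto
    then show "g a \<in> B \<longleftrightarrow> a \<in> B'" using fD(4) ideal_diff_iff[OF B'] by blast
  next
    fix a assume "a \<in> A"
    then show "\<exists>a'\<in>A'. a - g a' \<in> B" using f_cong gA fD(3) by blast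
  next
    fix x a assume a: "a \<in> A'"
    have xa: "br x a \<in> A'" using ideal_bracket_right[OF A' a] .
    have "br x (f (g a)) - f (br x (g a)) \<in> B'" using fD(6) gA a by blast
    then have "f (br x (g a)) - br x (f (g a)) \<in> B'"
      using ideal_minus[OF B', of "br x (f (g a)) - f (br x (g a))"] by simp
    moreover have "br x (f (g a)) - br x a \<in> B'"
      using ideal_bracket_right[OF B' g_inv[OF a]] by (simp add: bracket_diff_right)
    moreover have "br x a - f (g (br x a)) \<in> B'" using gA xa by blast
    ultimately have "(f (br x (g a)) - br x (f (g a))) + (br x (f (g a)) - br x a)
        + (br x a - f (g (br x a))) \<in> B'"
      using ideal_add[OF B'] by blast
    then have "f (br x (g a)) - f (g (br x a)) \<in> B'" by simp
    then show "br x (g a) - g (br x a) \<in> B"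
      using f_cong gA a xa ideal_bracket_right[OF A] by blast
  qed (use g gA in \<open>auto simp: linear_iff\<close>)
  then show ?thesis unfolding lie_mod_iso_iff_map by blast
qed

lemma centralizer_eq_if_lie_mod_iso:
  assumes A: "ideal A" and B': "ideal B'" and "lie_mod_iso scale br A B A' B'"
  shows "centralizer A B = centralizer A' B'"
proof -
  obtain f where f: "lie_mod_iso_map f A B A' B'"
    using assms(3) unfolding lie_mod_iso_iff_map by blast
  note fD = lie_mod_iso_mapD[OF f] and hom = lie_mod_iso_map_bracket[OF f A B']
  show ?thesis
  proof (intro equalityI subsetI)
    fix x assume x: "x \<in> centralizer A B"
    show "x \<in> centralizer A' B'" unfolding centralizer_def mem_Collect_eq
    proof
      fix a' assume "a' \<in> A'"
      then obtain a where a: "a \<in> A" "a' - f a \<in> B'" using fD(5) by blast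
      have "br x (a' - f a) \<in> B'" using ideal_bracket_right[OF B' a(2)] .
      moreover have "br x (f a) \<in> B'" using hom a x unfolding centralizer_def by blast
      ultimately show "br x a' \<in> B'"
        using ideal_diff_iff[OF B'] by (simp add: bracket_diff_right)
    qed
  next
    fix x assume "x \<in> centralizer A' B'"
    then show "x \<in> centralizer A B" using hom fD(3) unfolding centralizer_def by blast
  qed
qed

lemma second_isomorphism:
  assumes U: "ideal U" and W: "ideal W" and R: "ideal R"
    and "U \<subseteq> W + R" and "W \<subseteq> U + R"
  shows "lie_mod_iso scale br U (U \<inter> R) W (W \<inter> R)"
proof -
  have "\<forall>u\<in>U. \<exists>w\<in>W. u - id w \<in> R"
  proof
    fix u assume "u \<in> U"
    then obtain w r where "u = w + r" "w \<in> W" "r \<in> R"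
      using \<open>U \<subseteq> W + R\<close> by (auto elim!: set_plus_elim)
    then show "\<exists>w\<in>W. u - id w \<in> R" by force
  qed
  then obtain g where g: "Vector_Spaces.linear scale scale g"
    and gW: "\<And>u. u \<in> U \<Longrightarrow> g u \<in> W \<and> u - g u \<in> R"
    using exists_linear_lift[OF ideal_subspace[OF U] ideal_subspace[OF W] ideal_subspace[OF R],
        of id] by force
  show ?thesis unfolding lie_mod_iso_def
  proof (rule exI[of _ g], intro conjI)
    show "\<forall>a\<in>U. g a \<in> W \<inter> R \<longleftrightarrow> a \<in> U \<inter> R"
      using gW ideal_diff_iff[OF R] by blast
    show "\<forall>w\<in>W. \<exists>u\<in>U. w - g u \<in> W \<inter> R"
    proof
      fix w assume w: "w \<in> W"
      then obtain u r where ur: "w = u + r" "u \<in> U" "r \<in> R"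
        using \<open>W \<subseteq> U + R\<close> by (auto elim!: set_plus_elim)
      have "w - g u = r + (u - g u)" using ur by (simp add: algebra_simps)
      moreover have "r + (u - g u) \<in> R" using ur gW ideal_add[OF R] by blast
      ultimately have "w - g u \<in> R" by (simp only:)
      moreover have "w - g u \<in> W" using w gW ur ideal_diff[OF W] by blast
      ultimately show "\<exists>u\<in>U. w - g u \<in> W \<inter> R" using ur by blast
    qed
    show "\<forall>x. \<forall>a\<in>U. br x (g a) - g (br x a) \<in> W \<inter> R"
    proof (intro allI ballI)
      fix x a assume a: "a \<in> U"
      have xa: "br x a \<in> U" using ideal_bracket_right[OF U a] .
      have "br x (g a) - g (br x a) \<in> W"
        using gW a xa ideal_bracket_right[OF W] ideal_diff[OF W] by blast
      moreover have "br x a - br x (g a) \<in> R"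
        using ideal_bracket_right[OF R, of "a - g a" x] gW a by (simp add: bracket_diff_right)
      then have "(br x a - g (br x a)) - (br x a - br x (g a)) \<in> R"
        using gW[OF xa] ideal_diff[OF R] by blast
      then have "br x (g a) - g (br x a) \<in> R" by (simp add: algebra_simps)
      ultimately show "br x (g a) - g (br x a) \<in> W \<inter> R" by blast
    qed
  qed (use g gW in \<open>auto simp: linear_iff\<close>)
qed

lemma chief_factor_ideals: "chief_factor scale br A B \<Longrightarrow> ideal A \<and> ideal B"
  unfolding chief_factor_def by blast

lemma chief_factor_subset_plus:
  assumes "chief_factor scale br A B" and J: "ideal J" and "\<not> J \<subseteq> centralizer A B"
  shows "A \<subseteq> J + B"
proof -
  have A: "ideal A" and B: "ideal B" and "B \<subset> A"
    and no_between: "\<not> (\<exists>C. ideal C \<and> B \<subset> C \<and> C \<subset> A)"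
    using assms(1) unfolding chief_factor_def by blast+
  obtain j a where j: "j \<in> J" "a \<in> A" "br j a \<notin> B"
    using assms(3) unfolding centralizer_def by blast
  define K where "K = J \<inter> A + B"
  have "ideal K" unfolding K_def using ideal_set_plus ideal_Int J A B by blast
  moreover have "B \<subseteq> K" unfolding K_def
    using set_plus_intro[of 0 "J \<inter> A" _ B] ideal_zero[OF J] ideal_zero[OF A] by force
  moreover have "K \<subseteq> A" unfolding K_def using \<open>B \<subset> A\<close> set_plus_subset_ideal[OF A] by blast
  moreover have "br j a \<in> K" unfolding K_def
    using j ideal_bracket_left[OF J] ideal_bracket_right[OF A] ideal_zero[OF B]
      set_plus_intro[of "br j a" "J \<inter> A" 0 B] by simp
  ultimately have "K = A" using no_between j(3) by blast
  moreover have "K \<subseteq> J + B" unfolding K_def by (rule set_plus_mono2) auto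
  ultimately show ?thesis by simp
qed

lemma subalgebra_plus_ideal:
  assumes S: "subalgebra S" and I: "ideal I" shows "subalgebra (S + I)"
  unfolding lie_subalgebra_def
proof (intro conjI ballI)
  show "subspace (S + I)" using subspace_set_plus subalgebra_subspace[OF S] ideal_subspace[OF I] by blast
  fix a b assume "a \<in> S + I" "b \<in> S + I"
  then obtain s1 i1 s2 i2 where "a = s1 + i1" "s1 \<in> S" "i1 \<in> I" "b = s2 + i2" "s2 \<in> S" "i2 \<in> I"
    by (auto elim!: set_plus_elim)
  moreover have "br a b = br s1 s2 + (br s1 i2 + br i1 s2 + br i1 i2)" if "a = s1 + i1" "b = s2 + i2"
    using that by (simp add: bracket_add_left bracket_add_right algebra_simps)
  moreover have "br s1 i2 + br i1 s2 + br i1 i2 \<in> I" if "i1 \<in> I" "i2 \<in> I"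
    using that ideal_add[OF I] ideal_bracket_left[OF I] ideal_bracket_right[OF I] by simp
  ultimately show "br a b \<in> S + I" using subalgebra_bracket[OF S] by (simp add: set_plus_intro)
qed

lemma ideal_Int_subalgebra:
  assumes M: "subalgebra M" and I: "ideal I" and "M + E = UNIV"
    and E_into_M: "\<And>e a. e \<in> E \<Longrightarrow> a \<in> I \<inter> M \<Longrightarrow> br e a \<in> M"
  shows "ideal (I \<inter> M)"
  unfolding lie_ideal_def
proof (intro conjI allI impI)
  show "subspace (I \<inter> M)" using subspace_inter ideal_subspace[OF I] subalgebra_subspace[OF M] by blast
  fix x a assume a: "a \<in> I \<inter> M"
  obtain m e where x: "x = m + e" "m \<in> M" "e \<in> E" using \<open>M + E = UNIV\<close>
    by (metis UNIV_I set_plus_elim)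
  have "br m a \<in> I \<inter> M" using a x subalgebra_bracket[OF M] ideal_bracket_right[OF I] by blast
  moreover have "br e a \<in> I \<inter> M" using a x E_into_M ideal_bracket_right[OF I] by blast
  ultimately show "br x a \<in> I \<inter> M"
    using x subspace_add[OF subspace_inter[OF ideal_subspace[OF I] subalgebra_subspace[OF M]]]
    by (simp add: bracket_add_left)
qed

lemma bracket_congruent: "ideal I \<Longrightarrow> a - b \<in> I \<Longrightarrow> c - d \<in> I \<Longrightarrow> br a c - br b d \<in> I"
proof -
  assume I: "ideal I" "a - b \<in> I" "c - d \<in> I"
  have "br a c - br b d = br (a - b) c + br b (c - d)" by (simp add: bracket_diff_left bracket_diff_right)
  then show ?thesis using I ideal_bracket_left ideal_bracket_right ideal_add by simp
qed

definition primitive_pair :: "'v set \<Rightarrow> 'v set \<Rightarrow> 'v set \<Rightarrow> 'v set \<Rightarrow> bool" where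
  "primitive_pair N M E1 E2 \<longleftrightarrow> ideal N \<and> N \<subseteq> M \<and> maximal_subalgebra scale br M
     \<and> (\<forall>I. ideal I \<and> N \<subseteq> I \<and> I \<subseteq> M \<longrightarrow> I = N)
     \<and> minimal_ideal_over scale br N E1 \<and> minimal_ideal_over scale br N E2 \<and> E1 \<noteq> E2"

lemma primitive_pair_sym: "primitive_pair N M E1 E2 \<Longrightarrow> primitive_pair N M E2 E1"
  unfolding primitive_pair_def by blast

lemma quotient_primitive_type3_pair:
  assumes "quotient_primitive_type3 scale br N" and "E1 \<noteq> E2"
    and "minimal_ideal_over scale br N E1" and "minimal_ideal_over scale br N E2"
  obtains M where "primitive_pair N M E1 E2"
proof -
  have "quotient_primitive scale br N"
    using assms(1) unfolding quotient_primitive_type3_def by (rule conjunct1)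
  then obtain M where "ideal N" "N \<subseteq> M" "maximal_subalgebra scale br M"
    "\<forall>I. ideal I \<and> N \<subseteq> I \<and> I \<subseteq> M \<longrightarrow> I = N"
    unfolding quotient_primitive_def by blast
  with assms(2-4) show thesis by (intro that) (simp add: primitive_pair_def)
qed

lemma minimal_ideal_over_chief_factor:
  "ideal N \<Longrightarrow> minimal_ideal_over scale br N E \<Longrightarrow> chief_factor scale br E N"
  unfolding minimal_ideal_over_def chief_factor_def by blast

context
  fixes N M E1 E2 assumes pair: "primitive_pair N M E1 E2"
begin

lemma primitive_pair_ideals: "ideal N" "ideal E1" "ideal E2" "N \<subset> E1" "N \<subset> E2"
  using pair unfolding primitive_pair_def minimal_ideal_over_def by blast+

lemma primitive_pair_subalgebra: "subalgebra M" "N \<subseteq> M"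
  using pair unfolding primitive_pair_def maximal_subalgebra_def by blast+

lemma primitive_pair_maximal: "subalgebra S \<Longrightarrow> M \<subseteq> S \<Longrightarrow> S = M \<or> S = UNIV"
  using pair unfolding primitive_pair_def maximal_subalgebra_def by blast

lemma primitive_pair_core_free: "ideal I \<Longrightarrow> N \<subseteq> I \<Longrightarrow> I \<subseteq> M \<Longrightarrow> I = N"
  using pair unfolding primitive_pair_def by blast

lemma primitive_pair_minimal: "\<not> (\<exists>C. ideal C \<and> N \<subset> C \<and> C \<subset> E1)" "\<not> (\<exists>C. ideal C \<and> N \<subset> C \<and> C \<subset> E2)"
  using pair unfolding primitive_pair_def minimal_ideal_over_def by blast+

lemma primitive_pair_inter: "E1 \<inter> E2 = N"
proof -
  have "E1 \<inter> E2 \<noteq> E1"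
  proof
    assume "E1 \<inter> E2 = E1"
    then have "E1 \<subset> E2" using pair unfolding primitive_pair_def by blast
    then show False using primitive_pair_minimal(2) primitive_pair_ideals(2,4) by blast
  qed
  then show ?thesis
    using primitive_pair_minimal(1) ideal_Int[OF primitive_pair_ideals(2,3)] primitive_pair_ideals(4,5)
    by blast
qed

lemma primitive_pair_plus: "M + E1 = UNIV"
proof -
  have "subalgebra (M + E1)"
    using subalgebra_plus_ideal primitive_pair_subalgebra(1) primitive_pair_ideals(2) by blast
  moreover have "M \<subseteq> M + E1" using subset_set_plus_right ideal_zero primitive_pair_ideals(2) by blast
  moreover have "\<not> E1 \<subseteq> M"
    using primitive_pair_core_free primitive_pair_ideals(2,4) by blast
  then have "M + E1 \<noteq> M"
    using set_plus_intro[of 0 M _ E1] subspace_0[OF subalgebra_subspace[OF primitive_pair_subalgebra(1)]]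
    by force
  ultimately show ?thesis using primitive_pair_maximal by blast
qed

end

lemma primitive_pair_inter_subalgebra:
  assumes pair: "primitive_pair N M E1 E2" shows "E1 \<inter> M = N"
proof -
  note ideals = primitive_pair_ideals[OF pair] and M = primitive_pair_subalgebra[OF pair]
  have "ideal (E1 \<inter> M)"
  proof (rule ideal_Int_subalgebra[OF M(1) ideals(2) primitive_pair_plus[OF primitive_pair_sym[OF pair]]])
    fix e a assume "e \<in> E2" "a \<in> E1 \<inter> M"
    then have "br e a \<in> E1 \<inter> E2" using ideal_bracket_Int[OF ideals(3,2)] by blast
    then show "br e a \<in> M" using primitive_pair_inter[OF pair] M(2) by blast
  qed
  then show ?thesis using primitive_pair_core_free[OF pair] ideals(4) M(2) by blast
qed

lemma primitive_pair_centralizer: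
  assumes pair: "primitive_pair N M E1 E2" shows "centralizer E1 N = E2"
proof -
  note ideals = primitive_pair_ideals[OF pair] and M = primitive_pair_subalgebra[OF pair]
  define C where "C = centralizer E1 N"
  have C: "ideal C" unfolding C_def using centralizer_ideal ideals by blast
  have "E2 \<subseteq> C" unfolding C_def centralizer_def
    using ideal_bracket_Int[OF ideals(3,2)] primitive_pair_inter[OF pair] by blast
  have "N \<subseteq> C" unfolding C_def centralizer_def using ideal_bracket_left[OF ideals(1)] by blast
  have "ideal (C \<inter> M)"
  proof (rule ideal_Int_subalgebra[OF M(1) C primitive_pair_plus[OF pair]])
    fix e c assume "e \<in> E1" "c \<in> C \<inter> M"
    then have "- br c e \<in> N" using ideal_minus[OF ideals(1)] unfolding C_def centralizer_def by blast
    then show "br e c \<in> M" using M(2) by (auto simp: bracket_antisym[of e c])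
  qed
  then have CM: "C \<inter> M = N"
    using primitive_pair_core_free[OF pair] \<open>N \<subseteq> C\<close> M(2) by blast
  have "C \<subseteq> E2"
  proof
    fix c assume c: "c \<in> C"
    obtain m e where me: "c = m + e" "m \<in> M" "e \<in> E2"
      using primitive_pair_plus[OF primitive_pair_sym[OF pair]] by (metis UNIV_I set_plus_elim)
    moreover have "e \<in> C" using me(3) \<open>E2 \<subseteq> C\<close> by blast
    ultimately have "m \<in> C" using c ideal_diff_iff[OF C, of c m] by simp
    then have "m \<in> E2" using CM me(2) ideals(5) by blast
    then show "c \<in> E2" using me ideal_add[OF ideals(3)] by simp
  qed
  then show ?thesis using \<open>E2 \<subseteq> C\<close> unfolding C_def by blast
qed

lemma ideal_diff_commute: "ideal I \<Longrightarrow> a - b \<in> I \<longleftrightarrow> b - a \<in> I"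
  using ideal_minus_iff[of I "a - b"] by simp

lemma ideal_add_congruent: "ideal I \<Longrightarrow> a - b \<in> I \<Longrightarrow> c - d \<in> I \<Longrightarrow> (a + c) - (b + d) \<in> I"
  using ideal_add[of I "a - b" "c - d"] by (simp add: algebra_simps)

lemma ideal_scale_congruent: "ideal I \<Longrightarrow> a - b \<in> I \<Longrightarrow> scale c a - scale c b \<in> I"
  using subspace_scale[OF ideal_subspace, of I "a - b" c] by (simp add: scale_right_diff_distrib)

definition linked :: "'v set \<Rightarrow> 'v set \<Rightarrow> 'v set \<Rightarrow> 'v set \<Rightarrow> 'v set \<Rightarrow> 'v set" where
  "linked M P X Q M' = {x. \<exists>m\<in>M. \<exists>m'\<in>M'. x - m \<in> P \<and> m - m' \<in> X \<and> m' - x \<in> Q}"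

lemma linkedI:
  "m \<in> M \<Longrightarrow> m' \<in> M' \<Longrightarrow> x - m \<in> P \<Longrightarrow> m - m' \<in> X \<Longrightarrow> m' - x \<in> Q \<Longrightarrow> x \<in> linked M P X Q M'"
  unfolding linked_def by blast

lemma linkedE:
  assumes "x \<in> linked M P X Q M'"
  obtains m m' where "m \<in> M" "m' \<in> M'" "x - m \<in> P" "m - m' \<in> X" "m' - x \<in> Q"
  using assms unfolding linked_def by blast

lemma linked_subalgebra:
  assumes M: "subalgebra M" and M': "subalgebra M'" and P: "ideal P" and X: "ideal X" and Q: "ideal Q"
  shows "subalgebra (linked M P X Q M')"
  unfolding lie_subalgebra_def
proof (intro conjI ballI)
  note M_sub = subalgebra_subspace[OF M] subalgebra_subspace[OF M']
  show "subspace (linked M P X Q M')"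
  proof (rule subspaceI)
    show "0 \<in> linked M P X Q M'"
      by (rule linkedI[of 0 _ 0]) (simp_all add: subspace_0 M_sub ideal_zero P X Q)
  next
    fix x y assume "x \<in> linked M P X Q M'" "y \<in> linked M P X Q M'"
    then obtain m1 m1' m2 m2' where "m1 \<in> M" "m1' \<in> M'" "x - m1 \<in> P" "m1 - m1' \<in> X" "m1' - x \<in> Q"
      and "m2 \<in> M" "m2' \<in> M'" "y - m2 \<in> P" "m2 - m2' \<in> X" "m2' - y \<in> Q"
      by (elim linkedE)
    then show "x + y \<in> linked M P X Q M'"
      by (intro linkedI[of "m1 + m2" _ "m1' + m2'"])
        (simp_all add: subspace_add M_sub ideal_add_congruent P X Q)
  next
    fix c x assume "x \<in> linked M P X Q M'"
    then obtain m m' where "m \<in> M" "m' \<in> M'" "x - m \<in> P" "m - m' \<in> X" "m' - x \<in> Q"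
      by (elim linkedE)
    then show "scale c x \<in> linked M P X Q M'"
      by (intro linkedI[of "scale c m" _ "scale c m'"])
        (simp_all add: subspace_scale M_sub ideal_scale_congruent P X Q)
  qed
next
  fix x y assume "x \<in> linked M P X Q M'" "y \<in> linked M P X Q M'"
  then obtain m1 m1' m2 m2' where "m1 \<in> M" "m1' \<in> M'" "x - m1 \<in> P" "m1 - m1' \<in> X" "m1' - x \<in> Q"
    and "m2 \<in> M" "m2' \<in> M'" "y - m2 \<in> P" "m2 - m2' \<in> X" "m2' - y \<in> Q"
    by (elim linkedE)
  then show "br x y \<in> linked M P X Q M'"
    by (intro linkedI[of "br m1 m2" _ "br m1' m2'"])
      (simp_all add: subalgebra_bracket M M' bracket_congruent P X Q)
qed

lemma linked_subset_swap:
  assumes "ideal P" and "ideal X" and "ideal Q"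
  shows "linked M P X Q M' \<subseteq> linked M' Q X P M"
proof
  fix x assume "x \<in> linked M P X Q M'"
  then obtain m m' where "m \<in> M" "m' \<in> M'" "x - m \<in> P" "m - m' \<in> X" "m' - x \<in> Q"
    by (elim linkedE)
  then show "x \<in> linked M' Q X P M"
    by (intro linkedI[of m' _ m]) (simp_all add: ideal_diff_commute assms)
qed

lemma linked_swap: "ideal P \<Longrightarrow> ideal X \<Longrightarrow> ideal Q \<Longrightarrow> linked M' Q X P M = linked M P X Q M'"
  by (intro equalityI linked_subset_swap)

end

locale primitive_chain = lie_alg +
  fixes N M X P N' M' Q
  assumes pair: "primitive_pair N M X P" and pair': "primitive_pair N' M' Q X"
    and nonabelian: "nonabelian_over br N X" and nonabelian': "nonabelian_over br N' X"
    and P_ne_Q: "P \<noteq> Q"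
begin

lemma swapped: "primitive_chain scale br N' M' X Q N M P"
  using lie_alg_axioms pair pair' nonabelian nonabelian' P_ne_Q primitive_pair_sym
  unfolding primitive_chain_def primitive_chain_axioms_def by blast

lemma ideals: "ideal N" "ideal X" "ideal P" "ideal Q" "N \<subset> X" "N \<subset> P" "N' \<subset> X" "N' \<subset> Q"
  using primitive_pair_ideals[OF pair] primitive_pair_ideals[OF pair'] by blast+

lemma X_inter_P: "X \<inter> P = N"
  by (rule primitive_pair_inter[OF pair])

lemma X_subset_plus: "ideal J \<Longrightarrow> \<not> J \<subseteq> P \<Longrightarrow> X \<subseteq> J + N"
  using chief_factor_subset_plus[OF minimal_ideal_over_chief_factor]
    primitive_pair_centralizer[OF pair] ideals(1) pair unfolding primitive_pair_def by blast

lemma P_subset_plus: "ideal J \<Longrightarrow> \<not> J \<subseteq> X \<Longrightarrow> P \<subseteq> J + N"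
  using chief_factor_subset_plus[OF minimal_ideal_over_chief_factor]
    primitive_pair_centralizer[OF primitive_pair_sym[OF pair]] ideals(1) pair
  unfolding primitive_pair_def by blast

lemmas X_subset_plus' = primitive_chain.X_subset_plus[OF swapped]

lemmas X_inter_Q = primitive_chain.X_inter_P[OF swapped]

lemma not_Q_subset_P: "\<not> Q \<subseteq> P"
proof
  assume "Q \<subseteq> P"
  then have "\<not> P \<subseteq> Q" using P_ne_Q by blast
  then have "X \<subseteq> P + N'" using X_subset_plus' ideals(3) by blast
  also have "\<dots> \<subseteq> P" using set_plus_subset_ideal ideals(3,8) \<open>Q \<subseteq> P\<close> by blast
  finally show False using X_inter_P ideals(5) by blast
qed

lemmas not_P_subset_Q = primitive_chain.not_Q_subset_P[OF swapped]

lemma X_subset_P_plus_Q: "X \<subseteq> P + Q"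
proof -
  have "X \<subseteq> Q + N" using X_subset_plus ideals(4) not_Q_subset_P by blast
  also have "\<dots> \<subseteq> Q + P" using ideals(6) by (intro set_plus_mono2) auto
  finally show ?thesis by (simp add: add.commute)
qed

lemma P_subset_X_plus_Q: "P \<subseteq> X + Q"
proof -
  have "\<not> Q \<subseteq> X" using X_inter_Q ideals(8) by blast
  then have "P \<subseteq> Q + N" using P_subset_plus ideals(4) by blast
  also have "\<dots> \<subseteq> Q + X" using ideals(5) by (intro set_plus_mono2) auto
  finally show ?thesis by (simp add: add.commute)
qed

lemmas Q_subset_X_plus_P = primitive_chain.P_subset_X_plus_Q[OF swapped]

lemma lie_mod_iso_Q: "lie_mod_iso scale br Q (P \<inter> Q) X N"
proof -
  have "X \<subseteq> Q + P" using X_subset_P_plus_Q by (simp add: add.commute)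
  then have "lie_mod_iso scale br Q (Q \<inter> P) X (X \<inter> P)"
    using second_isomorphism[OF ideals(4,2,3) Q_subset_X_plus_P] by blast
  then show ?thesis using X_inter_P by (simp add: Int_commute)
qed

lemmas lie_mod_iso_P = primitive_chain.lie_mod_iso_Q[OF swapped, unfolded Int_commute[of Q P]]

lemma bracket_witness: obtains a b where "a \<in> X" "b \<in> X" "br a b \<notin> P"
  using nonabelian X_inter_P ideal_bracket_right[OF ideals(2)] unfolding nonabelian_over_def
  by blast

text \<open>An ideal not below P covers X/N; meeting Q only inside P, it would make [X, Q] \<subseteq> P and
  hence, as X \<subseteq> P + Q, make X/N abelian.\<close>
lemma ideal_subset_P_if_inter_Q:
  assumes I: "ideal I" and "I \<inter> Q \<subseteq> P" shows "I \<subseteq> P"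
proof (rule ccontr)
  assume "\<not> I \<subseteq> P"
  then have X_sub: "X \<subseteq> I + N" using X_subset_plus I by blast
  obtain a b where ab: "a \<in> X" "b \<in> X" "br a b \<notin> P" by (rule bracket_witness)
  obtain p q where pq: "b = p + q" "p \<in> P" "q \<in> Q"
    using ab(2) X_subset_P_plus_Q by (auto elim!: set_plus_elim)
  obtain i n where "a = i + n" "i \<in> I" "n \<in> N"
    using ab(1) X_sub by (auto elim!: set_plus_elim)
  moreover have "br i q \<in> P" using assms ideal_bracket_Int[OF I ideals(4)] \<open>i \<in> I\<close> pq(3) by blast
  moreover have "br n q \<in> P" using ideal_bracket_left[OF ideals(3)] \<open>n \<in> N\<close> ideals(6) by blast
  ultimately have "br a q \<in> P" using ideal_add[OF ideals(3)] by (simp add: bracket_add_left)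
  moreover have "br a p \<in> P" using ideal_bracket_right[OF ideals(3) pq(2)] .
  ultimately have "br a b \<in> P" using pq(1) ideal_add[OF ideals(3)] by (simp add: bracket_add_right)
  then show False using ab(3) by blast
qed

lemma minimal_Q: "minimal_ideal_over scale br (P \<inter> Q) Q"
  unfolding minimal_ideal_over_def
proof (intro conjI notI)
  show "ideal Q" "P \<inter> Q \<subset> Q" using ideals(4) not_Q_subset_P by blast+
  assume "\<exists>C. ideal C \<and> P \<inter> Q \<subset> C \<and> C \<subset> Q"
  then obtain C where C: "ideal C" "P \<inter> Q \<subset> C" "C \<subset> Q" by blast
  then have X_sub: "X \<subseteq> C + N" using X_subset_plus by blast
  have "Q \<subseteq> C"
  proof
    fix q assume q: "q \<in> Q"
    obtain x p where xp: "q = x + p" "x \<in> X" "p \<in> P"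
      using q Q_subset_X_plus_P by (auto elim!: set_plus_elim)
    obtain c n where cn: "x = c + n" "c \<in> C" "n \<in> N"
      using xp(2) X_sub by (auto elim!: set_plus_elim)
    have "q - c = n + p" using xp cn by (simp add: algebra_simps)
    then have "q - c \<in> P" using ideal_add[OF ideals(3)] cn(3) xp(3) ideals(6) by auto
    moreover have "q - c \<in> Q" using q cn(2) C(3) ideal_diff[OF ideals(4)] by blast
    ultimately have "q - c \<in> C" using C(2) by blast
    then show "q \<in> C" using ideal_diff_iff[OF C(1)] cn(2) by blast
  qed
  then show False using C(3) by blast
qed

lemmas minimal_P = primitive_chain.minimal_Q[OF swapped, unfolded Int_commute[of Q P]]

lemma minimal_cases:
  assumes E: "minimal_ideal_over scale br (P \<inter> Q) E" shows "E = P \<or> E = Q"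
proof -
  have E_ideal: "ideal E" and "P \<inter> Q \<subset> E"
    and E_min: "\<not> (\<exists>C. ideal C \<and> P \<inter> Q \<subset> C \<and> C \<subset> E)"
    using E unfolding minimal_ideal_over_def by blast+
  have Q_min: "\<not> (\<exists>C. ideal C \<and> P \<inter> Q \<subset> C \<and> C \<subset> Q)"
    and P_min: "\<not> (\<exists>C. ideal C \<and> P \<inter> Q \<subset> C \<and> C \<subset> P)"
    using minimal_Q minimal_P unfolding minimal_ideal_over_def by blast+
  have EQ: "ideal (E \<inter> Q)" using ideal_Int[OF E_ideal ideals(4)] .
  show ?thesis
  proof (cases "E \<inter> Q = Q")
    case True
    then show ?thesis using E_min ideals(4) not_Q_subset_P by blast
  next
    case False
    then have "E \<inter> Q = P \<inter> Q" using Q_min EQ \<open>P \<inter> Q \<subset> E\<close> by blast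
    then have "E \<subseteq> P" using ideal_subset_P_if_inter_Q[OF E_ideal] by blast
    then show ?thesis using P_min E_ideal \<open>P \<inter> Q \<subset> E\<close> by blast
  qed
qed

lemma nonabelian_Q: "nonabelian_over br (P \<inter> Q) Q"
proof -
  have X_sub: "X \<subseteq> Q + N" using X_subset_plus ideals(4) not_Q_subset_P by blast
  obtain a b where ab: "a \<in> X" "b \<in> X" "br a b \<notin> P" by (rule bracket_witness)
  obtain q1 n1 where a: "a = q1 + n1" "q1 \<in> Q" "n1 \<in> N"
    using ab(1) X_sub by (auto elim!: set_plus_elim)
  obtain q2 n2 where b: "b = q2 + n2" "q2 \<in> Q" "n2 \<in> N"
    using ab(2) X_sub by (auto elim!: set_plus_elim)
  have "br a b = br q1 q2 + (br q1 n2 + br n1 b)"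
    using a b by (simp add: bracket_add_left bracket_add_right algebra_simps)
  moreover have "br q1 n2 + br n1 b \<in> P"
    using a b ideals(6) ideal_add[OF ideals(3)] ideal_bracket_right[OF ideals(3)]
      ideal_bracket_left[OF ideals(3)] by blast
  ultimately have "br q1 q2 \<notin> P" using ab(3) ideal_add[OF ideals(3)] by auto
  then show ?thesis unfolding nonabelian_over_def using a(2) b(2) by blast
qed

lemmas nonabelian_P = primitive_chain.nonabelian_Q[OF swapped, unfolded Int_commute[of Q P]]

abbreviation glued where "glued \<equiv> linked M P X Q M'"

lemma glued_swap: "linked M' Q X P M = glued"
  using linked_swap ideals(2-4) by blast

lemma glued_subalgebra: "subalgebra glued"
  using linked_subalgebra primitive_pair_subalgebra(1)[OF pair] primitive_pair_subalgebra(1)[OF pair']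
    ideals(2-4) by blast

lemma glued_inter_P: "glued \<inter> P \<subseteq> Q"
proof
  fix x assume "x \<in> glued \<inter> P"
  then obtain m m' where x: "x \<in> P" "m \<in> M" "m' \<in> M'" "x - m \<in> P" "m - m' \<in> X" "m' - x \<in> Q"
    by (auto elim: linkedE)
  have "P \<inter> M = N" using primitive_pair_inter_subalgebra[OF primitive_pair_sym[OF pair]] .
  then have "m \<in> X" using x ideal_diff_iff[OF ideals(3)] ideals(5) by blast
  moreover have "X \<inter> M' = N'" using primitive_pair_inter_subalgebra[OF primitive_pair_sym[OF pair']] .
  ultimately have "m' \<in> Q" using x ideal_diff_iff[OF ideals(2)] ideals(8) by blast
  then show "x \<in> Q" using x ideal_diff_iff[OF ideals(4)] by blast
qed

lemmas glued_inter_Q = primitive_chain.glued_inter_P[OF swapped, unfolded glued_swap]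

lemma inter_subset_glued: "P \<inter> Q \<subseteq> glued"
proof
  fix x assume "x \<in> P \<inter> Q"
  moreover have "0 \<in> M" "0 \<in> M'"
    using subspace_0 subalgebra_subspace primitive_pair_subalgebra(1)[OF pair]
      primitive_pair_subalgebra(1)[OF pair'] by blast+
  ultimately show "x \<in> glued"
    using ideal_zero[OF ideals(2)] ideal_minus[OF ideals(4)] by (intro linkedI[of 0 _ 0]) auto
qed

lemma glued_plus_P: "glued + P = UNIV"
proof -
  have "x \<in> glued + P" for x
  proof -
    obtain m p1 where 1: "x = m + p1" "m \<in> M" "p1 \<in> P"
      using primitive_pair_plus[OF primitive_pair_sym[OF pair]] by (metis UNIV_I set_plus_elim)
    obtain m' x1 where 2: "m = m' + x1" "m' \<in> M'" "x1 \<in> X"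
      using primitive_pair_plus[OF primitive_pair_sym[OF pair']] by (metis UNIV_I set_plus_elim)
    obtain p2 q2 where 3: "x1 = p2 + q2" "p2 \<in> P" "q2 \<in> Q"
      using 2(3) X_subset_P_plus_Q by (auto elim!: set_plus_elim)
    have "x - p1 - p2 - m = - p2" "m - m' = x1" "m' - (x - p1 - p2) = - q2"
      using 1 2 3 by (simp_all add: algebra_simps)
    then have "x - p1 - p2 \<in> glued"
      using 1 2 3 ideal_minus ideals by (intro linkedI[of m _ m']) simp_all
    moreover have "p1 + p2 \<in> P" using 1 3 ideal_add ideals(3) by blast
    ultimately have "(x - p1 - p2) + (p1 + p2) \<in> glued + P" by (rule set_plus_intro)
    then show ?thesis by simp
  qed
  then show ?thesis by blast
qed

lemmas glued_plus_Q = primitive_chain.glued_plus_P[OF swapped, unfolded glued_swap]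

lemma extension_ideal:
  assumes S: "subalgebra S" and "glued \<subseteq> S" shows "ideal (S \<inter> P + Q)"
  unfolding lie_ideal_def
proof (intro conjI allI impI)
  show "subspace (S \<inter> P + Q)"
    using subspace_set_plus subspace_inter subalgebra_subspace[OF S] ideal_subspace ideals(3,4) by blast
  fix z a assume "a \<in> S \<inter> P + Q"
  then obtain s q where a: "a = s + q" "s \<in> S \<inter> P" "q \<in> Q" by (rule set_plus_elim)
  obtain y q' where z: "z = y + q'" "y \<in> glued" "q' \<in> Q"
    using glued_plus_Q by (metis UNIV_I set_plus_elim)
  have "br z a = br y s + (br y q + br q' s + br q' q)"
    using a z by (simp add: bracket_add_left bracket_add_right algebra_simps)
  moreover have "br y s \<in> S \<inter> P"
    using a z assms subalgebra_bracket[OF S] ideal_bracket_right[OF ideals(3)] by blast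
  moreover have "br y q + br q' s + br q' q \<in> Q"
    using a z ideal_add[OF ideals(4)] ideal_bracket_left[OF ideals(4)] ideal_bracket_right[OF ideals(4)]
    by simp
  ultimately show "br z a \<in> S \<inter> P + Q" by (simp add: set_plus_intro)
qed

lemma extension_UNIV:
  assumes S: "subalgebra S" and "glued \<subseteq> S" and "\<not> S \<inter> P \<subseteq> Q" shows "S = UNIV"
proof -
  define J where "J = S \<inter> P + Q"
  have J: "ideal J" unfolding J_def using extension_ideal assms by blast
  have "Q \<subseteq> J" unfolding J_def
    using subset_set_plus_right[of "S \<inter> P" Q] subspace_0 subalgebra_subspace[OF S] ideal_zero[OF ideals(3)]
    by (simp add: add.commute)
  moreover have "\<not> J \<subseteq> Q"
    using assms(3) subset_set_plus_right[of Q "S \<inter> P"] ideal_zero[OF ideals(4)]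
    unfolding J_def by blast
  then have "X \<subseteq> J + N'" using X_subset_plus' J by blast
  ultimately have "X \<subseteq> J" using set_plus_subset_ideal[OF J] ideals(8) by blast
  then have "P \<subseteq> J" using P_subset_X_plus_Q set_plus_subset_ideal[OF J] \<open>Q \<subseteq> J\<close> by blast
  have "z \<in> S" for z
  proof -
    obtain y p where yp: "z = y + p" "y \<in> glued" "p \<in> P"
      using glued_plus_P by (metis UNIV_I set_plus_elim)
    then obtain s q where sq: "p = s + q" "s \<in> S \<inter> P" "q \<in> Q"
      using \<open>P \<subseteq> J\<close> unfolding J_def by (auto elim!: set_plus_elim)
    then have "p - s \<in> P" using yp(3) ideal_diff[OF ideals(3)] by blast
    then have "q \<in> P" using sq(1) by simp
    then have "q \<in> S" using sq(3) inter_subset_glued assms(2) by blast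
    then have "y \<in> S" "s + q \<in> S"
      using yp(2) sq(2) assms(2) subspace_add[OF subalgebra_subspace[OF S]] by blast+
    then show "z \<in> S" using yp(1) sq(1) subspace_add[OF subalgebra_subspace[OF S]] by simp
  qed
  then show ?thesis by blast
qed

lemma glued_maximal: "maximal_subalgebra scale br glued"
  unfolding maximal_subalgebra_def
proof (intro conjI allI impI)
  show "subalgebra glued" by (rule glued_subalgebra)
  show "glued \<noteq> UNIV" using glued_inter_P not_P_subset_Q by blast
  fix S assume S: "subalgebra S \<and> glued \<subseteq> S"
  show "S = glued \<or> S = UNIV"
  proof (cases "S = glued")
    case False
    then obtain s where s: "s \<in> S" "s \<notin> glued" using S by blast
    obtain y p where yp: "s = y + p" "y \<in> glued" "p \<in> P"
      using glued_plus_P by (metis UNIV_I set_plus_elim)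
    then have "p \<in> S"
      using s S subspace_diff[OF subalgebra_subspace, of S s y] by auto
    moreover have "p \<notin> Q"
      using s yp inter_subset_glued subspace_add[OF subalgebra_subspace[OF glued_subalgebra]] by blast
    ultimately show ?thesis using extension_UNIV S yp(3) by blast
  qed simp
qed

lemma glued_core_free: "ideal I \<Longrightarrow> P \<inter> Q \<subseteq> I \<Longrightarrow> I \<subseteq> glued \<Longrightarrow> I = P \<inter> Q"
  using ideal_subset_P_if_inter_Q glued_inter_P glued_inter_Q by blast

lemma type3_inter: "quotient_primitive_type3 scale br (P \<inter> Q)"
  unfolding quotient_primitive_type3_def quotient_primitive_def
proof (intro conjI exI allI impI)
  show "ideal (P \<inter> Q)" using ideal_Int ideals(3,4) by blast
  show "P \<inter> Q \<subseteq> glued" "maximal_subalgebra scale br glued"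
    using inter_subset_glued glued_maximal by blast+
  show "I = P \<inter> Q" if "ideal I \<and> P \<inter> Q \<subseteq> I \<and> I \<subseteq> glued" for I
    using that glued_core_free by blast
  show "P \<noteq> Q" "minimal_ideal_over scale br (P \<inter> Q) P" "minimal_ideal_over scale br (P \<inter> Q) Q"
    using P_ne_Q minimal_P minimal_Q by blast+
  show "E = P \<or> E = Q" if "minimal_ideal_over scale br (P \<inter> Q) E" for E
    using minimal_cases that by blast
  show "nonabelian_over br (P \<inter> Q) E" if "minimal_ideal_over scale br (P \<inter> Q) E" for E
    using minimal_cases[OF that] nonabelian_P nonabelian_Q by blast
qed

end

context lie_alg
begin

lemma type3_nonabelian:
  "quotient_primitive_type3 scale br N \<Longrightarrow> minimal_ideal_over scale br N E \<Longrightarrow> nonabelian_over br N E"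
  unfolding quotient_primitive_type3_def by blast

lemma minimal_ideal_over_ideal: "minimal_ideal_over scale br N E \<Longrightarrow> ideal E"
  unfolding minimal_ideal_over_def by blast

lemma L_connected_type3I:
  assumes "quotient_primitive_type3 scale br N" and "E1 \<noteq> E2"
    and "minimal_ideal_over scale br N E1" and "minimal_ideal_over scale br N E2"
    and "lie_mod_iso scale br E1 N A1 B1" and "lie_mod_iso scale br E2 N A2 B2"
  shows "L_connected scale br A1 B1 A2 B2"
  unfolding L_connected_def using assms by blast

lemma L_connectedE:
  assumes "L_connected scale br A1 B1 A2 B2"
  obtains (iso) "lie_mod_iso scale br A1 B1 A2 B2"
    | (type3) N E1 E2 where "quotient_primitive_type3 scale br N" "E1 \<noteq> E2"
      "minimal_ideal_over scale br N E1" "minimal_ideal_over scale br N E2"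
      "lie_mod_iso scale br E1 N A1 B1" "lie_mod_iso scale br E2 N A2 B2"
  using assms unfolding L_connected_def by blast

lemma L_connected_refl: "chief_factor scale br A B \<Longrightarrow> L_connected scale br A B A B"
  unfolding L_connected_def using lie_mod_iso_refl chief_factor_ideals by blast

lemma L_connected_sym:
  assumes "chief_factor scale br A1 B1" and "chief_factor scale br A2 B2"
    and "L_connected scale br A1 B1 A2 B2"
  shows "L_connected scale br A2 B2 A1 B1"
  using assms(3)
proof (cases rule: L_connectedE)
  case iso
  then show ?thesis
    using lie_mod_iso_sym chief_factor_ideals assms(1,2) unfolding L_connected_def by blast
next
  case (type3 N E1 E2)
  then show ?thesis by (intro L_connected_type3I[of N E2 E1]) auto
qed

lemma L_connected_iso_trans:
  assumes "chief_factor scale br A1 B1" and "chief_factor scale br A2 B2"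
    and "chief_factor scale br A3 B3"
    and iso12: "lie_mod_iso scale br A1 B1 A2 B2" and "L_connected scale br A2 B2 A3 B3"
  shows "L_connected scale br A1 B1 A3 B3"
  using assms(5)
proof (cases rule: L_connectedE)
  case iso
  then show ?thesis
    using lie_mod_iso_trans iso12 chief_factor_ideals assms(1-3) unfolding L_connected_def by blast
next
  case (type3 N E1 E2)
  have "lie_mod_iso scale br A2 B2 A1 B1"
    using lie_mod_iso_sym iso12 chief_factor_ideals assms(1,2) by blast
  then have "lie_mod_iso scale br E1 N A1 B1"
    using lie_mod_iso_trans type3 minimal_ideal_over_ideal chief_factor_ideals assms(1,2) by blast
  then show ?thesis using type3 by (intro L_connected_type3I[of N E1 E2]) auto
qed

lemma L_connected_type3_trans:
  assumes chief: "chief_factor scale br A1 B1" "chief_factor scale br A2 B2" "chief_factor scale br A3 B3"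
    and t: "quotient_primitive_type3 scale br N" "E1 \<noteq> E2"
      "minimal_ideal_over scale br N E1" "minimal_ideal_over scale br N E2"
      "lie_mod_iso scale br E1 N A1 B1" "lie_mod_iso scale br E2 N A2 B2"
    and t': "quotient_primitive_type3 scale br N'" "E1' \<noteq> E2'"
      "minimal_ideal_over scale br N' E1'" "minimal_ideal_over scale br N' E2'"
      "lie_mod_iso scale br E1' N' A2 B2" "lie_mod_iso scale br E2' N' A3 B3"
  shows "L_connected scale br A1 B1 A3 B3"
proof -
  obtain M where pair: "primitive_pair N M E1 E2" using quotient_primitive_type3_pair t(1-4) .
  obtain M' where pair': "primitive_pair N' M' E1' E2'" using quotient_primitive_type3_pair t'(1-4) .
  note ideals = primitive_pair_ideals[OF pair] primitive_pair_ideals[OF pair'] chief_factor_ideals[OF chief(2)]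
  have "E2' = centralizer E1' N'" using primitive_pair_centralizer[OF pair'] by simp
  also have "\<dots> = centralizer A2 B2" using centralizer_eq_if_lie_mod_iso ideals t'(5) by blast
  also have "\<dots> = centralizer E2 N" using centralizer_eq_if_lie_mod_iso ideals t(6) by metis
  also have "\<dots> = E1" using primitive_pair_centralizer[OF primitive_pair_sym[OF pair]] .
  finally have E2': "E2' = E1" .
  show ?thesis
  proof (cases "E1' = E2")
    case True
    then have "N' = N" using primitive_pair_inter[OF pair] primitive_pair_inter[OF pair'] E2' by blast
    have "lie_mod_iso scale br A1 B1 E1 N"
      using lie_mod_iso_sym t(5) ideals chief_factor_ideals[OF chief(1)] by blast
    then have "lie_mod_iso scale br A1 B1 A3 B3"
      using lie_mod_iso_trans t'(6) E2' \<open>N' = N\<close> ideals chief_factor_ideals chief by metis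
    then show ?thesis unfolding L_connected_def by blast
  next
    case False
    interpret primitive_chain scale br N M E1 E2 N' M' E1'
      using pair pair' E2' False type3_nonabelian t t'
      by unfold_locales auto
    have "lie_mod_iso scale br E1' (E2 \<inter> E1') A1 B1"
      using lie_mod_iso_trans lie_mod_iso_Q t(5) ideals chief_factor_ideals chief by blast
    moreover have "lie_mod_iso scale br E2 (E2 \<inter> E1') A3 B3"
      using lie_mod_iso_trans lie_mod_iso_P t'(6) E2' ideals chief_factor_ideals chief by blast
    ultimately show ?thesis
      using type3_inter False minimal_P minimal_Q by (intro L_connected_type3I[of "E2 \<inter> E1'" E1' E2]) auto
  qed
qed

lemma L_connected_trans:
  assumes chief: "chief_factor scale br A1 B1" "chief_factor scale br A2 B2" "chief_factor scale br A3 B3"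
    and c12: "L_connected scale br A1 B1 A2 B2" and c23: "L_connected scale br A2 B2 A3 B3"
  shows "L_connected scale br A1 B1 A3 B3"
  using c12
proof (cases rule: L_connectedE)
  case iso
  then show ?thesis using L_connected_iso_trans chief c23 by blast
next
  case t: (type3 N E1 E2)
  from c23 show ?thesis
  proof (cases rule: L_connectedE)
    case iso
    then have "lie_mod_iso scale br E2 N A3 B3"
      using lie_mod_iso_trans t minimal_ideal_over_ideal chief_factor_ideals chief by blast
    then show ?thesis using t by (intro L_connected_type3I[of N E1 E2]) auto
  next
    case (type3 N' E1' E2')
    then show ?thesis using L_connected_type3_trans[OF chief t] by blast
  qed
qed

theorem L_connected_equiv: "equiv (chief_factors scale br) (L_connected_rel scale br)"
proof (rule equivI)
  show "L_connected_rel scale br \<subseteq> chief_factors scale br \<times> chief_factors scale br"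
    unfolding L_connected_rel_def chief_factors_def by auto
  show "refl_on (chief_factors scale br) (L_connected_rel scale br)"
    by (rule refl_onI) (auto simp: chief_factors_def L_connected_rel_def L_connected_refl)
  show "sym (L_connected_rel scale br)"
    by (rule symI) (auto simp: L_connected_rel_def intro: L_connected_sym)
  show "trans (L_connected_rel scale br)"
    by (rule transI) (auto simp: L_connected_rel_def intro: L_connected_trans)
qed

end

theorem theorem2p5:
  fixes scale :: "'k::field \<Rightarrow> 'v::ab_group_add \<Rightarrow> 'v" and br :: "'v \<Rightarrow> 'v \<Rightarrow> 'v"
  assumes "lie_algebra scale br" and "finite_dim scale"
  shows "equiv (chief_factors scale br) (L_connected_rel scale br)"
proof -
  interpret lie_alg scale br by (rule lie_alg.intro[OF assms(1)])
  show ?thesis by (rule L_connected_equiv)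
qed

end
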